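(* Let $\mathcal{E}$ and $\mathcal{F}$ be finite-dimensional real Hilbert spaces, let $\mathcal{A}:\mathcal{E}\to\mathcal{F}$ be an injective linear operator, and let $K\subseteq\mathcal{E}$ be a nonempty closed convex set. Then for any $p>0$, the metric projection $\Pi_K:\mathcal{E}\to\mathcal{E}$ is $p$-order semismooth if and only if the metric projection $\Pi_{\mathcal{A}K}:\mathcal{F}\to\mathcal{F}$ is $p$-order semismooth.
   Context: For a nonempty closed convex set $C$ in a finite-dimensional real Hilbert space, $\Pi_C(x)$ denotes the unique point of $C$ nearest to $x$ in the norm induced by the inner product. For a locally Lipschitz $f:\mathcal{E}\to\mathcal{F}$, let $D_f$ be the set of points where $f$ is differentiable; the Bouligand subdifferential is $\partial_B f(x)=\{\lim_k f'(x_k) : x_k\to x,\ x_k\in D_f,\ f'(x_k)\text{ convergent}\}$ and the Clarke generalized Jacobian is $\partial f(x)=\mathrm{conv}\,\partial_B f(x)$. For $p>0$, a locally Lipschitz $f$ is $p$-order semismooth at $x$ if $f$ is directionally differentiable at $x$ and, for any $V\in\partial f(x+h)$, $\|f(x+h)-f(x)-Vh\|=O(\|h\|^{1+p})$ as $h\to 0$; $f$ is $p$-order semismooth if it is $p$-order semismooth at every point. *)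

theory Defs
  imports "HOL-Analysis.Analysis"
begin

definition loc_lipschitz :: "('a::euclidean_space \<Rightarrow> 'b::euclidean_space) \<Rightarrow> bool" where
  "loc_lipschitz f \<longleftrightarrow>
     (\<forall>x. \<exists>e>0. \<exists>L. \<forall>y\<in>ball x e. \<forall>z\<in>ball x e. dist (f y) (f z) \<le> L * dist y z)"

definition bouligand_subdiff ::
  "('a::euclidean_space \<Rightarrow> 'b::euclidean_space) \<Rightarrow> 'a \<Rightarrow> ('a \<Rightarrow>\<^sub>L 'b) set" where
  "bouligand_subdiff f x = {V. \<exists>(X::nat \<Rightarrow> 'a) (D::nat \<Rightarrow> ('a \<Rightarrow>\<^sub>L 'b)).
      X \<longlonglongrightarrow> x \<and> (\<forall>k. (f has_derivative blinfun_apply (D k)) (at (X k))) \<and> D \<longlonglongrightarrow> V}"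

definition clarke_jac ::
  "('a::euclidean_space \<Rightarrow> 'b::euclidean_space) \<Rightarrow> 'a \<Rightarrow> ('a \<Rightarrow>\<^sub>L 'b) set" where
  "clarke_jac f x = convex hull (bouligand_subdiff f x)"

definition dir_differentiable_at ::
  "('a::euclidean_space \<Rightarrow> 'b::euclidean_space) \<Rightarrow> 'a \<Rightarrow> bool" where
  "dir_differentiable_at f x \<longleftrightarrow>
     (\<forall>h. \<exists>d. ((\<lambda>t. (f (x + t *\<^sub>R h) - f x) /\<^sub>R t) \<longlongrightarrow> d) (at_right 0))"

definition semismooth_at ::
  "real \<Rightarrow> ('a::euclidean_space \<Rightarrow> 'b::euclidean_space) \<Rightarrow> 'a \<Rightarrow> bool" where
  "semismooth_at p f x \<longleftrightarrow> loc_lipschitz f \<and> dir_differentiable_at f x \<and>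
     (\<exists>C \<delta>. \<delta> > 0 \<and> (\<forall>h. norm h < \<delta> \<longrightarrow>
        (\<forall>V\<in>clarke_jac f (x + h). norm (f (x + h) - f x - blinfun_apply V h) \<le> C * norm h powr (1 + p))))"

definition semismooth ::
  "real \<Rightarrow> ('a::euclidean_space \<Rightarrow> 'b::euclidean_space) \<Rightarrow> bool" where
  "semismooth p f \<longleftrightarrow> (\<forall>x. semismooth_at p f x)"

end

(*
  Write A = J B with B a linear automorphism and J a linear isometric embedding.  For J, the
  projection onto J ` S is J o P o J^* with J^* J = id, so semismoothness transfers by conjugation.

  For B, let P and Q project onto K and B ` K.  The maps Psi y = B^-1 (Q y) + B^* (y - Q y) and
  Phi x = B (P x) + B^-* (x - P x) are mutually inverse and Lipschitz, with P o Psi = B^-1 o Q.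
  Every cluster value q of the difference quotients of Q at y in direction h solves
  B^-1 q = P'(Psi y; B^-1 q + B^* (h - q)), which has at most one solution because the
  directional derivative of P is firmly nonexpansive; compactness then gives directional
  differentiability of Q.  Where Q has derivative V, Psi has the injective derivative
  B^-1 V + B^* (I - V), so P is differentiable at the corresponding point, and firmness of its
  derivative bounds the linearization error of Q by (|B^-1| + |B^*|) times that of P.

  Only derivatives at differentiability points need to be checked: the Clarke Jacobian is the
  convex hull of their limits, and the semismoothness estimate is convex and closed in V.
*)

theory Submission
  imports Defs
begin

section \<open>Semismoothness through Frechet derivatives\<close>

definition semismooth_deriv_bound ::
  "real \<Rightarrow> ('a::euclidean_space \<Rightarrow> 'b::euclidean_space) \<Rightarrow> 'a \<Rightarrow> bool" where
  "semismooth_deriv_bound p f x \<longleftrightarrow> (\<exists>C \<delta>. \<delta> > 0 \<and> (\<forall>h f'. norm h < \<delta> \<longrightarrow>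
      (f has_derivative f') (at (x + h)) \<longrightarrow> norm (f (x + h) - f x - f' h) \<le> C * norm h powr (1 + p)))"

lemma Blinfun_in_bouligand_subdiff:
  assumes "(f has_derivative f') (at x)"
  shows "Blinfun f' \<in> bouligand_subdiff f x"
proof -
  have "bounded_linear f'" using assms has_derivative_bounded_linear by blast
  then show ?thesis
    unfolding bouligand_subdiff_def using assms
    by (intro CollectI exI[of _ "\<lambda>_. x"] exI[of _ "\<lambda>_. Blinfun f'"])
      (simp add: bounded_linear_Blinfun_apply)
qed

lemma clarke_jac_error_bound:
  fixes f :: "'a::euclidean_space \<Rightarrow> 'b::euclidean_space" and g :: "'a \<Rightarrow> real"
  assumes f: "continuous_on UNIV f" and g: "continuous_on UNIV g" and U: "open U"
    and deriv: "\<And>y f'. y \<in> U \<Longrightarrow> (f has_derivative f') (at y) \<Longrightarrow> norm (f y - c - f' (y - x)) \<le> g y"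
    and "y \<in> U"
  shows "\<forall>V\<in>clarke_jac f y. norm (f y - c - blinfun_apply V (y - x)) \<le> g y"
proof -
  let ?S = "{V. norm (f y - c - blinfun_apply V (y - x)) \<le> g y}"
  have "convex ?S"
  proof -
    have "?S = (\<lambda>V. blinfun_apply V (y - x)) -` cball (f y - c) (g y)"
      by (auto simp: dist_norm)
    then show ?thesis
      using convex_linear_vimage[OF _ convex_cball]
      by (metis bounded_linear.linear blinfun.bounded_linear_left)
  qed
  moreover have "bouligand_subdiff f y \<subseteq> ?S"
  proof
    fix V assume "V \<in> bouligand_subdiff f y"
    then obtain X D where X: "X \<longlonglongrightarrow> y" and D: "\<And>k. (f has_derivative blinfun_apply (D k)) (at (X k))"
      and DV: "D \<longlonglongrightarrow> V"
      unfolding bouligand_subdiff_def by blast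
    have "eventually (\<lambda>k. X k \<in> U) sequentially"
      using X U \<open>y \<in> U\<close> by (rule topological_tendstoD)
    then have bound:
      "eventually (\<lambda>k. norm (f (X k) - c - blinfun_apply (D k) (X k - x)) \<le> g (X k)) sequentially"
      by eventually_elim (use deriv D in blast)
    have lhs: "(\<lambda>k. norm (f (X k) - c - blinfun_apply (D k) (X k - x)))
        \<longlonglongrightarrow> norm (f y - c - blinfun_apply V (y - x))"
      using X by (intro tendsto_intros blinfun.tendsto DV continuous_on_tendsto_compose[OF f X]) auto
    have rhs: "(\<lambda>k. g (X k)) \<longlonglongrightarrow> g y"
      using g X by (intro continuous_on_tendsto_compose[OF g X]) auto
    show "V \<in> ?S" using tendsto_le[OF trivial_limit_sequentially rhs lhs bound] by simp
  qed
  ultimately have "clarke_jac f y \<subseteq> ?S"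
    unfolding clarke_jac_def by (intro hull_minimal)
  then show ?thesis by blast
qed

lemma semismooth_at_iff_deriv_bound:
  fixes f :: "'a::euclidean_space \<Rightarrow> 'b::euclidean_space"
  assumes f: "continuous_on UNIV f" and "p > 0"
  shows "semismooth_at p f x \<longleftrightarrow>
    loc_lipschitz f \<and> dir_differentiable_at f x \<and> semismooth_deriv_bound p f x"
proof -
  have "semismooth_deriv_bound p f x" if "semismooth_at p f x"
  proof -
    obtain C \<delta> where "\<delta> > 0" and bound: "\<And>h V. norm h < \<delta> \<Longrightarrow> V \<in> clarke_jac f (x + h) \<Longrightarrow>
        norm (f (x + h) - f x - blinfun_apply V h) \<le> C * norm h powr (1 + p)"
      using \<open>semismooth_at p f x\<close> unfolding semismooth_at_def by blast
    have "norm (f (x + h) - f x - f' h) \<le> C * norm h powr (1 + p)"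
      if "norm h < \<delta>" and f': "(f has_derivative f') (at (x + h))" for h f'
    proof -
      have "Blinfun f' \<in> clarke_jac f (x + h)"
        unfolding clarke_jac_def by (rule hull_inc[OF Blinfun_in_bouligand_subdiff[OF f']])
      moreover have "blinfun_apply (Blinfun f') = f'"
        using f' has_derivative_bounded_linear bounded_linear_Blinfun_apply by blast
      ultimately show ?thesis
        using bound[OF \<open>norm h < \<delta>\<close>] by metis
    qed
    with \<open>\<delta> > 0\<close> show ?thesis unfolding semismooth_deriv_bound_def by blast
  qed
  moreover have "\<exists>C \<delta>. \<delta> > 0 \<and> (\<forall>h. norm h < \<delta> \<longrightarrow> (\<forall>V\<in>clarke_jac f (x + h).
      norm (f (x + h) - f x - blinfun_apply V h) \<le> C * norm h powr (1 + p)))"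
    if "semismooth_deriv_bound p f x"
  proof -
    obtain C \<delta> where "\<delta> > 0" and bound: "\<And>h f'. norm h < \<delta> \<Longrightarrow> (f has_derivative f') (at (x + h)) \<Longrightarrow>
        norm (f (x + h) - f x - f' h) \<le> C * norm h powr (1 + p)"
      using \<open>semismooth_deriv_bound p f x\<close> unfolding semismooth_deriv_bound_def by blast
    have g: "continuous_on UNIV (\<lambda>y. C * norm (y - x) powr (1 + p))"
      using \<open>p > 0\<close> by (intro continuous_intros continuous_on_powr') auto
    have "\<forall>V\<in>clarke_jac f (x + h).
        norm (f (x + h) - f x - blinfun_apply V h) \<le> C * norm h powr (1 + p)"
      if "norm h < \<delta>" for h
    proof -
      have "\<forall>V\<in>clarke_jac f (x + h).
          norm (f (x + h) - f x - blinfun_apply V (x + h - x)) \<le> C * norm (x + h - x) powr (1 + p)"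
      proof (rule clarke_jac_error_bound[OF f g open_ball])
        show "x + h \<in> ball x \<delta>" using that by (simp add: dist_norm)
        show "norm (f z - f x - f' (z - x)) \<le> C * norm (z - x) powr (1 + p)"
          if "z \<in> ball x \<delta>" "(f has_derivative f') (at z)" for z f'
          using bound[of "z - x" f'] that by (simp add: dist_norm norm_minus_commute)
      qed
      then show ?thesis by simp
    qed
    with \<open>\<delta> > 0\<close> show ?thesis by blast
  qed
  ultimately show ?thesis unfolding semismooth_at_def by blast
qed

section \<open>Metric projections\<close>

lemma closest_point_eqI:
  fixes S :: "'a::{real_inner,heine_borel} set"
  assumes "convex S" "closed S" "z \<in> S" and obtuse: "\<And>s. s \<in> S \<Longrightarrow> inner (a - z) (s - z) \<le> 0"
  shows "closest_point S a = z"
proof -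
  have "dist a z \<le> dist a s" if "s \<in> S" for s
  proof -
    have "(dist a s)\<^sup>2 = (dist a z)\<^sup>2 + (norm (z - s))\<^sup>2 - 2 * inner (a - z) (s - z)"
      unfolding dist_norm power2_norm_eq_inner
      by (simp add: inner_diff_left inner_diff_right inner_commute algebra_simps)
    then have "(dist a z)\<^sup>2 \<le> (dist a s)\<^sup>2"
      using obtuse[OF that] zero_le_power2[of "norm (z - s)"] by linarith
    then show ?thesis by (simp add: power2_le_iff_abs_le)
  qed
  then show ?thesis using closest_point_unique[OF assms(1-3)] by metis
qed

lemma closest_point_firmly_nonexpansive:
  fixes S :: "'a::{real_inner,heine_borel} set"
  assumes "convex S" "closed S" "S \<noteq> {}"
  shows "0 \<le> inner (closest_point S a - closest_point S b)
                   ((a - closest_point S a) - (b - closest_point S b))"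
proof -
  have "inner (a - closest_point S a) (closest_point S b - closest_point S a) \<le> 0"
    and "inner (b - closest_point S b) (closest_point S a - closest_point S b) \<le> 0"
    by (simp_all add: assms closest_point_dot closest_point_in_set)
  then show ?thesis
    by (simp add: inner_diff_left inner_diff_right inner_commute algebra_simps)
qed

lemma loc_lipschitz_closest_point:
  fixes S :: "'a::euclidean_space set"
  assumes "convex S" "closed S" "S \<noteq> {}"
  shows "loc_lipschitz (closest_point S)"
  unfolding loc_lipschitz_def using closest_point_lipschitz[OF assms] by (metis mult_1 zero_less_one)

lemma has_derivative_imp_directional_limit:
  assumes "(f has_derivative f') (at x)"
  shows "((\<lambda>t. (f (x + t *\<^sub>R z) - f x) /\<^sub>R t) \<longlongrightarrow> f' z) (at_right 0)"
proof -
  have line: "((\<lambda>t. x + t *\<^sub>R z) has_derivative (\<lambda>t. t *\<^sub>R z)) (at 0 within {0<..})"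
    by (auto intro!: derivative_eq_intros)
  have "((\<lambda>t. f (x + t *\<^sub>R z)) has_derivative (\<lambda>t. f' (t *\<^sub>R z))) (at 0 within {0<..})"
    using has_derivative_compose[OF line, of f f'] assms by (simp add: comp_def)
  then have "((\<lambda>t. (f (x + t *\<^sub>R z) - f x - t *\<^sub>R f' z) /\<^sub>R norm t) \<longlongrightarrow> 0) (at_right 0)"
    using linear_scale[OF has_derivative_linear[OF assms]] by (simp add: has_derivative_at_within)
  then have "((\<lambda>t. (f (x + t *\<^sub>R z) - f x) /\<^sub>R t - f' z) \<longlongrightarrow> 0) (at_right 0)"
    by (rule Lim_transform_eventually)
       (auto simp: eventually_at_right_field algebra_simps intro!: exI[of _ 1])
  then show ?thesis by (simp add: LIM_zero_iff)
qed

lemma closest_point_directional_limits_firm: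
  fixes S :: "'a::{real_inner,heine_borel} set"
  assumes S: "convex S" "closed S" "S \<noteq> {}"
    and Da: "((\<lambda>t. (closest_point S (x + t *\<^sub>R a) - closest_point S x) /\<^sub>R t) \<longlongrightarrow> Da) (at_right 0)"
    and Db: "((\<lambda>t. (closest_point S (x + t *\<^sub>R b) - closest_point S x) /\<^sub>R t) \<longlongrightarrow> Db) (at_right 0)"
  shows "0 \<le> inner (Da - Db) ((a - Da) - (b - Db))"
proof -
  define q where "q c t = (closest_point S (x + t *\<^sub>R c) - closest_point S x) /\<^sub>R t" for c t
  have "0 \<le> inner (q a t - q b t) ((a - q a t) - (b - q b t))" if "t > 0" for t
  proof -
    have "0 \<le> inner (t *\<^sub>R (q a t - q b t)) (t *\<^sub>R ((a - q a t) - (b - q b t)))"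
      using closest_point_firmly_nonexpansive[OF S, of "x + t *\<^sub>R a" "x + t *\<^sub>R b"] \<open>t > 0\<close>
      by (simp add: q_def algebra_simps)
    then show ?thesis using \<open>t > 0\<close> by (simp add: zero_le_mult_iff)
  qed
  then have "eventually (\<lambda>t. 0 \<le> inner (q a t - q b t) ((a - q a t) - (b - q b t))) (at_right 0)"
    by (simp add: eventually_at_right_field) (meson zero_less_one)
  moreover have "((\<lambda>t. inner (q a t - q b t) ((a - q a t) - (b - q b t)))
      \<longlongrightarrow> inner (Da - Db) ((a - Da) - (b - Db))) (at_right 0)"
    using Da Db unfolding q_def[symmetric] by (intro tendsto_intros)
  ultimately show ?thesis by (simp add: tendsto_lowerbound)
qed

lemma closest_point_derivative_firm:
  fixes S :: "'a::{real_inner,heine_borel} set"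
  assumes "convex S" "closed S" "S \<noteq> {}"
    and "(closest_point S has_derivative W) (at x)"
  shows "0 \<le> inner (W z) (z - W z)"
  using closest_point_directional_limits_firm[OF assms(1-3)
      has_derivative_imp_directional_limit[OF assms(4)], of 0 0]
  by simp

lemma semismooth_closest_point_iff:
  fixes S :: "'a::euclidean_space set"
  assumes "convex S" "closed S" "S \<noteq> {}" "p > 0"
  shows "semismooth p (closest_point S) \<longleftrightarrow>
    (\<forall>x. dir_differentiable_at (closest_point S) x) \<and>
    (\<forall>x. semismooth_deriv_bound p (closest_point S) x)"
  using semismooth_at_iff_deriv_bound[OF continuous_on_closest_point[OF assms(1-3)] assms(4)]
    loc_lipschitz_closest_point[OF assms(1-3)]
  unfolding semismooth_def by blast

lemma bounded_unique_cluster_imp_tendsto_at_right: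
  fixes f :: "real \<Rightarrow> 'a::heine_borel"
  assumes bounded: "bounded (f ` {0<..})"
    and cluster: "\<And>s L. (\<And>n. s n > 0) \<Longrightarrow> s \<longlonglongrightarrow> 0 \<Longrightarrow> (\<lambda>n. f (s n)) \<longlonglongrightarrow> L \<Longrightarrow> R L"
    and unique: "\<And>L1 L2. R L1 \<Longrightarrow> R L2 \<Longrightarrow> L1 = L2"
  shows "\<exists>L. (f \<longlongrightarrow> L) (at_right 0)"
proof -
  have convergent_subseq: "\<exists>r L. (\<lambda>n. f (s (r n))) \<longlonglongrightarrow> L \<and> R L"
    if s: "\<And>n. s n > 0" "s \<longlonglongrightarrow> 0" for s
  proof -
    have "bounded (range (f \<circ> s))"
      using s(1) by (intro bounded_subset[OF bounded]) auto
    then obtain r L where r: "strict_mono r" and L: "(f \<circ> s \<circ> r) \<longlonglongrightarrow> L"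
      using bounded_imp_convergent_subsequence by blast
    have "R L"
      using cluster[of "s \<circ> r"] s LIMSEQ_subseq_LIMSEQ[OF s(2) r] L by (simp add: comp_def)
    with L show ?thesis by (auto simp: comp_def)
  qed
  define s0 where "s0 n = inverse (real (Suc n))" for n
  have s0: "\<And>n. s0 n > 0" "s0 \<longlonglongrightarrow> 0"
    unfolding s0_def using LIMSEQ_inverse_real_of_nat by auto
  then obtain L0 where "R L0" using convergent_subseq by blast
  have "(f \<longlongrightarrow> L0) (at_right 0)"
    unfolding tendsto_iff
  proof (rule ccontr)
    assume "\<not> (\<forall>e>0. eventually (\<lambda>t. dist (f t) L0 < e) (at_right 0))"
    then obtain e where "e > 0" and far: "\<forall>b>0. \<exists>t. 0 < t \<and> t < b \<and> e \<le> dist (f t) L0"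
      unfolding eventually_at_right_field by (meson not_le)
    have "\<forall>n. \<exists>t. 0 < t \<and> t < s0 n \<and> e \<le> dist (f t) L0"
      using far s0(1) by blast
    then obtain s where s: "\<And>n. 0 < s n" "\<And>n. s n < s0 n" "\<And>n. e \<le> dist (f (s n)) L0"
      by metis
    have "s \<longlonglongrightarrow> 0"
    proof (rule tendsto_sandwich[of "\<lambda>_. 0" _ _ s0])
      show "eventually (\<lambda>n. 0 \<le> s n) sequentially" "eventually (\<lambda>n. s n \<le> s0 n) sequentially"
        using s(1,2) by (simp_all add: less_imp_le)
    qed (use s0(2) in simp_all)
    then obtain r L where r: "(\<lambda>n. f (s (r n))) \<longlonglongrightarrow> L" and "R L"
      using convergent_subseq s(1) by blast
    have "L = L0" using \<open>R L\<close> \<open>R L0\<close> by (rule unique)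
    then have "(\<lambda>n. dist (f (s (r n))) L0) \<longlonglongrightarrow> 0"
      using tendsto_dist[OF r tendsto_const[of L0]] by simp
    then have "eventually (\<lambda>n. dist (f (s (r n))) L0 < e) sequentially"
      using \<open>e > 0\<close> by (rule order_tendstoD(2))
    then obtain n where "dist (f (s (r n))) L0 < e"
      by (meson eventually_sequentially order_refl)
    with s(3) show False by (simp add: not_le[symmetric])
  qed
  then show ?thesis by blast
qed

section \<open>Projection onto the image under a linear automorphism\<close>

lemma adjoint_left_inverse:
  fixes f :: "'a::euclidean_space \<Rightarrow> 'b::euclidean_space" and g :: "'b \<Rightarrow> 'a"
  assumes "linear f" "linear g" "\<And>x. g (f x) = x"
  shows "adjoint f (adjoint g y) = y"
proof -
  have "inner x (adjoint f (adjoint g y)) = inner x y" for x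
    using assms by (simp add: adjoint_works)
  then show ?thesis using vector_eq_ldot by blast
qed

locale closest_point_linear_iso =
  fixes B Bi :: "'a::euclidean_space \<Rightarrow> 'a" and K :: "'a set"
  assumes linear_B: "linear B" and linear_Bi: "linear Bi"
    and B_Bi: "\<And>y. B (Bi y) = y" and Bi_B: "\<And>x. Bi (B x) = x"
    and convex_K: "convex K" and closed_K: "closed K" and nonempty_K: "K \<noteq> {}"
begin

abbreviation "P \<equiv> closest_point K"
abbreviation "Q \<equiv> closest_point (B ` K)"

(* B^* maps normals of B ` K at Q y to normals of K at B^-1 (Q y); Phi reverses this. *)
definition Psi :: "'a \<Rightarrow> 'a" where "Psi y = Bi (Q y) + adjoint B (y - Q y)"
definition Phi :: "'a \<Rightarrow> 'a" where "Phi x = B (P x) + adjoint Bi (x - P x)"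

lemma bounded_linear_maps: "bounded_linear B" "bounded_linear Bi"
  "bounded_linear (adjoint B)" "bounded_linear (adjoint Bi)"
  using linear_B linear_Bi adjoint_linear by (auto simp: linear_conv_bounded_linear)

lemmas linear_iso_simps =
  linear_simps[OF bounded_linear_maps(1)] linear_simps[OF bounded_linear_maps(2)]
  linear_simps[OF bounded_linear_maps(3)] linear_simps[OF bounded_linear_maps(4)]

lemma adjoint_B_Bi: "adjoint B (adjoint Bi x) = x"
  using adjoint_left_inverse[OF linear_B linear_Bi Bi_B] .

lemma adjoint_Bi_B: "adjoint Bi (adjoint B x) = x"
  using adjoint_left_inverse[OF linear_Bi linear_B B_Bi] .

lemma convex_image: "convex (B ` K)"
  using convex_linear_image[OF linear_B convex_K] .

lemma closed_image: "closed (B ` K)"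
  using closed_injective_linear_image[OF closed_K linear_B] Bi_B by (metis injI)

lemma nonempty_image: "B ` K \<noteq> {}"
  using nonempty_K by simp

lemma closest_point_Psi: "P (Psi y) = Bi (Q y)"
proof (rule closest_point_eqI[OF convex_K closed_K])
  show "Bi (Q y) \<in> K"
    using closest_point_in_set[OF closed_image nonempty_image, of y] Bi_B by auto
  show "inner (Psi y - Bi (Q y)) (s - Bi (Q y)) \<le> 0" if "s \<in> K" for s
  proof -
    have "Psi y - Bi (Q y) = adjoint B (y - Q y)"
      by (simp add: Psi_def)
    then have "inner (Psi y - Bi (Q y)) (s - Bi (Q y)) = inner (y - Q y) (B (s - Bi (Q y)))"
      by (simp add: adjoint_clauses(2)[OF linear_B])
    also have "\<dots> = inner (y - Q y) (B s - Q y)"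
      by (simp add: linear_iso_simps B_Bi)
    also have "\<dots> \<le> 0"
      using closest_point_dot[OF convex_image closed_image] that by simp
    finally show ?thesis .
  qed
qed

lemma closest_point_Phi: "Q (Phi x) = B (P x)"
proof (rule closest_point_eqI[OF convex_image closed_image])
  show "B (P x) \<in> B ` K"
    using closest_point_in_set[OF closed_K nonempty_K] by simp
  show "inner (Phi x - B (P x)) (s - B (P x)) \<le> 0" if "s \<in> B ` K" for s
  proof -
    obtain k where "k \<in> K" "s = B k" using \<open>s \<in> B ` K\<close> by blast
    then have "inner (Phi x - B (P x)) (s - B (P x)) = inner (x - P x) (k - P x)"
      by (simp add: Phi_def adjoint_clauses(2)[OF linear_Bi] linear_iso_simps[symmetric] Bi_B)
    also have "\<dots> \<le> 0"
      by (rule closest_point_dot[OF convex_K closed_K \<open>k \<in> K\<close>])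
    finally show ?thesis .
  qed
qed

lemma Psi_Phi: "Psi (Phi x) = x"
  by (simp add: Psi_def closest_point_Phi Bi_B) (simp add: Phi_def linear_iso_simps adjoint_B_Bi)

lemma Phi_Psi: "Phi (Psi y) = y"
  by (simp add: Phi_def closest_point_Psi B_Bi) (simp add: Psi_def linear_iso_simps adjoint_Bi_B)

lemma P_eq: "P x = Bi (Q (Phi x))"
  by (simp add: closest_point_Phi Bi_B)

lemma Psi_diff: "Psi a - Psi b = Bi (Q a - Q b) + adjoint B ((a - b) - (Q a - Q b))"
  by (simp add: Psi_def linear_iso_simps algebra_simps)

lemma directional_quotient_fixed_point:
  assumes D: "\<And>d. ((\<lambda>t. (P (Psi y + t *\<^sub>R d) - P (Psi y)) /\<^sub>R t) \<longlongrightarrow> D d) (at_right 0)"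
    and s: "\<And>n. s n > 0" "s \<longlonglongrightarrow> 0"
    and L: "(\<lambda>n. (Q (y + s n *\<^sub>R h) - Q y) /\<^sub>R s n) \<longlonglongrightarrow> L"
  shows "Bi L = D (Bi L + adjoint B (h - L))"
proof -
  define q where "q n = (Q (y + s n *\<^sub>R h) - Q y) /\<^sub>R s n" for n
  define d where "d n = Bi (q n) + adjoint B (h - q n)" for n
  define d_lim where "d_lim = Bi L + adjoint B (h - L)"
  have q: "q \<longlonglongrightarrow> L"
    using L unfolding q_def .
  have Bi_q_lim: "(\<lambda>n. Bi (q n)) \<longlonglongrightarrow> Bi L"
    by (rule bounded_linear.tendsto[OF bounded_linear_maps(2) q])
  have d: "d \<longlonglongrightarrow> d_lim"
    unfolding d_def d_lim_def
    by (intro tendsto_add Bi_q_lim bounded_linear.tendsto[OF bounded_linear_maps(3)]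
        tendsto_diff tendsto_const q)
  have Bi_q: "Bi (q n) = (P (Psi y + s n *\<^sub>R d n) - P (Psi y)) /\<^sub>R s n" for n
  proof -
    have "Psi (y + s n *\<^sub>R h) = Psi y + s n *\<^sub>R d n"
      using Psi_diff[of "y + s n *\<^sub>R h" y] s(1)[of n]
      by (simp add: d_def q_def linear_iso_simps algebra_simps)
    then show ?thesis
      using s(1)[of n] by (simp add: q_def closest_point_Psi[symmetric] linear_iso_simps)
  qed
  define g where "g n = (P (Psi y + s n *\<^sub>R d_lim) - P (Psi y)) /\<^sub>R s n" for n
  \<comment> \<open>P is nonexpansive, so the moving direction d n may be replaced by its limit.\<close>
  have close: "norm (Bi (q n) - g n) \<le> norm (d n - d_lim)" for n
  proof -
    have "norm (P (Psi y + s n *\<^sub>R d n) - P (Psi y + s n *\<^sub>R d_lim))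
        \<le> dist (Psi y + s n *\<^sub>R d n) (Psi y + s n *\<^sub>R d_lim)"
      using closest_point_lipschitz[OF convex_K closed_K nonempty_K] by (metis dist_norm)
    also have "\<dots> = s n * norm (d n - d_lim)"
      using s(1)[of n] by (simp add: dist_norm flip: scaleR_diff_right)
    finally show ?thesis
      using s(1)[of n] by (simp add: Bi_q g_def divide_simps mult.commute flip: scaleR_diff_right)
  qed
  have "(\<lambda>n. Bi (q n) - g n) \<longlonglongrightarrow> 0"
    using close
    by (intro Lim_null_comparison[OF always_eventually tendsto_norm_zero[OF LIM_zero[OF d]]]) blast
  moreover have "g \<longlonglongrightarrow> D d_lim"
    unfolding g_def
    using filterlim_compose[OF D tendsto_imp_filterlim_at_right[OF s(2)]] s(1) by simp
  ultimately have "(\<lambda>n. Bi (q n)) \<longlonglongrightarrow> D d_lim"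
    by (rule Lim_transform[rotated])
  with Bi_q_lim show ?thesis
    unfolding d_lim_def using LIMSEQ_unique by blast
qed

lemma directional_fixed_point_unique:
  assumes D: "\<And>d. ((\<lambda>t. (P (Psi y + t *\<^sub>R d) - P (Psi y)) /\<^sub>R t) \<longlongrightarrow> D d) (at_right 0)"
    and L1: "Bi L1 = D (Bi L1 + adjoint B (h - L1))"
    and L2: "Bi L2 = D (Bi L2 + adjoint B (h - L2))"
  shows "L1 = L2"
proof -
  let ?d1 = "Bi L1 + adjoint B (h - L1)" and ?d2 = "Bi L2 + adjoint B (h - L2)"
  have "0 \<le> inner (D ?d1 - D ?d2) ((?d1 - D ?d1) - (?d2 - D ?d2))"
    by (rule closest_point_directional_limits_firm[OF convex_K closed_K nonempty_K D D])
  also have "\<dots> = inner (Bi (L1 - L2)) (adjoint B (L2 - L1))"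
    unfolding L1[symmetric] L2[symmetric] by (simp add: linear_iso_simps algebra_simps)
  also have "\<dots> = - inner (L1 - L2) (L1 - L2)"
    by (simp add: adjoint_clauses(1)[OF linear_B] B_Bi inner_diff_right inner_diff_left inner_commute)
  finally show ?thesis
    using inner_ge_zero[of "L1 - L2"] by simp
qed

lemma dir_differentiable_at_Q:
  assumes "dir_differentiable_at P (Psi y)"
  shows "dir_differentiable_at Q y"
  unfolding dir_differentiable_at_def
proof
  fix h
  obtain D where D: "\<And>d. ((\<lambda>t. (P (Psi y + t *\<^sub>R d) - P (Psi y)) /\<^sub>R t) \<longlongrightarrow> D d) (at_right 0)"
    using assms unfolding dir_differentiable_at_def by metis
  have "norm ((Q (y + t *\<^sub>R h) - Q y) /\<^sub>R t) \<le> norm h" if "t > 0" for t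
    using closest_point_lipschitz[OF convex_image closed_image nonempty_image, of "y + t *\<^sub>R h" y] that
    by (simp add: dist_norm divide_simps mult.commute)
  then have "bounded ((\<lambda>t. (Q (y + t *\<^sub>R h) - Q y) /\<^sub>R t) ` {0<..})"
    unfolding bounded_iff by blast
  then show "\<exists>d. ((\<lambda>t. (Q (y + t *\<^sub>R h) - Q y) /\<^sub>R t) \<longlongrightarrow> d) (at_right 0)"
    using directional_quotient_fixed_point[OF D] directional_fixed_point_unique[OF D]
    by (rule bounded_unique_cluster_imp_tendsto_at_right)
qed

lemma Psi_lipschitz:
  obtains L where "L > 0" "\<And>a b. norm (Psi a - Psi b) \<le> L * norm (a - b)"
proof
  let ?L = "onorm Bi + 2 * onorm (adjoint B) + 1"
  show "?L > 0"
    using onorm_pos_le[OF bounded_linear_maps(2)] onorm_pos_le[OF bounded_linear_maps(3)] by simp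
  fix a b
  have Q: "norm (Q a - Q b) \<le> norm (a - b)"
    using closest_point_lipschitz[OF convex_image closed_image nonempty_image] by (simp add: dist_norm)
  have "norm (Psi a - Psi b)
      \<le> onorm Bi * norm (Q a - Q b) + onorm (adjoint B) * norm ((a - b) - (Q a - Q b))"
    unfolding Psi_diff
    by (intro norm_triangle_le add_mono onorm bounded_linear_maps)
  also have "\<dots> \<le> onorm Bi * norm (a - b) + onorm (adjoint B) * (2 * norm (a - b))"
    using Q norm_triangle_ineq4[of "a - b" "Q a - Q b"]
    by (intro add_mono mult_left_mono onorm_pos_le bounded_linear_maps) auto
  also have "\<dots> \<le> ?L * norm (a - b)"
    by (simp add: algebra_simps)
  finally show "norm (Psi a - Psi b) \<le> ?L * norm (a - b)" .
qed

lemma has_derivative_Psi: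
  assumes "(Q has_derivative V) (at w)"
  shows "(Psi has_derivative (\<lambda>v. Bi (V v) + adjoint B (v - V v))) (at w)"
proof -
  have Psi_eq: "Psi = (\<lambda>y. Bi (Q y) + adjoint B (y - Q y))"
    by (simp add: Psi_def fun_eq_iff)
  show ?thesis
    unfolding Psi_eq
    by (intro has_derivative_add bounded_linear.has_derivative[OF bounded_linear_maps(2) assms]
        bounded_linear.has_derivative[OF bounded_linear_maps(3)] has_derivative_diff
        has_derivative_ident assms)
qed

lemma Psi_derivative_injective:
  assumes Q': "(Q has_derivative V) (at w)"
  shows "inj (\<lambda>v. Bi (V v) + adjoint B (v - V v))"
proof -
  have kernel: "v = 0" if "Bi (V v) + adjoint B (v - V v) = 0" for v
  proof -
    define u where "u = v - V v"
    have "B (Bi (V v) + adjoint B u) = 0"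
      using that linear_0[OF linear_B] by (simp add: u_def)
    then have "V v = - B (adjoint B u)"
      by (simp add: linear_iso_simps B_Bi eq_neg_iff_add_eq_0)
    then have "inner (V v) u = - inner (adjoint B u) (adjoint B u)"
      by (simp add: adjoint_clauses(2)[OF linear_B] inner_commute)
    moreover have "0 \<le> inner (V v) u"
      unfolding u_def
      by (rule closest_point_derivative_firm[OF convex_image closed_image nonempty_image Q'])
    ultimately have "adjoint B u = 0"
      using inner_ge_zero[of "adjoint B u"] by simp
    then have "u = 0"
      using adjoint_Bi_B[of u] by (simp add: linear_iso_simps)
    with \<open>V v = - B (adjoint B u)\<close> show "v = 0"
      by (simp add: u_def linear_iso_simps)
  qed
  show ?thesis
    unfolding linear_injective_0[OF has_derivative_linear[OF has_derivative_Psi[OF Q']]]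
    using kernel by blast
qed

lemma has_derivative_P_at_Psi:
  assumes Q': "(Q has_derivative V) (at w)"
  obtains W where "(P has_derivative W) (at (Psi w))"
    and "\<And>v. W (Bi (V v) + adjoint B (v - V v)) = Bi (V v)"
proof -
  define T where "T v = Bi (V v) + adjoint B (v - V v)" for v
  obtain T' where "linear T'" and T'_T: "T' \<circ> T = id"
    using linear_injective_left_inverse has_derivative_linear[OF has_derivative_Psi[OF Q']]
      Psi_derivative_injective[OF Q'] unfolding T_def[abs_def] by blast
  have Phi': "(Phi has_derivative T') (at (Psi w))"
  proof (rule has_derivative_inverse_basic[where f = Psi and T = UNIV])
    show "(Psi has_derivative T) (at (Phi (Psi w)))"
      unfolding Phi_Psi T_def[abs_def] by (rule has_derivative_Psi[OF Q'])
    show "continuous (at (Psi w)) Phi"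
      unfolding Phi_def[abs_def] using continuous_at_closest_point[OF convex_K closed_K nonempty_K]
      by (intro continuous_add continuous_diff continuous_ident
          bounded_linear.continuous[OF bounded_linear_maps(1)]
          bounded_linear.continuous[OF bounded_linear_maps(4)])
  qed (use \<open>linear T'\<close> T'_T Psi_Phi in \<open>auto simp: linear_conv_bounded_linear\<close>)
  have "(P has_derivative (\<lambda>v. Bi (V (T' v)))) (at (Psi w))"
  proof -
    have "P = (\<lambda>x. Bi (Q (Phi x)))"
      using P_eq by blast
    moreover have "(Q has_derivative V) (at (Phi (Psi w)))"
      using Q' by (simp add: Phi_Psi)
    ultimately show ?thesis
      using bounded_linear.has_derivative[OF bounded_linear_maps(2) has_derivative_compose[OF Phi']]
      by (simp add: comp_def)
  qed
  moreover have "Bi (V (T' (T v))) = Bi (V v)" for v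
    using T'_T by (simp add: fun_eq_iff)
  ultimately show ?thesis
    using that unfolding T_def by blast
qed

lemma firm_error_bound:
  assumes firm: "\<And>z. 0 \<le> inner (W z) (z - W z)" and W: "W (Bi e - adjoint B e) = Bi e - r"
  shows "norm e \<le> (onorm Bi + onorm (adjoint B)) * norm r"
proof -
  have firm': "0 \<le> inner (Bi e - r) (r - adjoint B e)"
    using firm[of "Bi e - adjoint B e"] unfolding W by simp
  have expand: "inner (Bi e - r) (r - adjoint B e)
      = inner (Bi e) r - inner (Bi e) (adjoint B e) - inner r r + inner r (adjoint B e)"
    by (simp add: inner_diff_left inner_diff_right inner_commute)
  have "(norm e)\<^sup>2 = inner (Bi e) (adjoint B e)"
    by (simp add: adjoint_clauses(1)[OF linear_B] B_Bi power2_norm_eq_inner)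
  also have "\<dots> \<le> inner (Bi e) r + inner r (adjoint B e)"
    using firm' expand inner_ge_zero[of r] by linarith
  also have "\<dots> \<le> norm (Bi e) * norm r + norm r * norm (adjoint B e)"
    by (intro add_mono norm_cauchy_schwarz)
  also have "\<dots> \<le> (onorm Bi * norm e) * norm r + norm r * (onorm (adjoint B) * norm e)"
    by (intro add_mono mult_right_mono mult_left_mono onorm bounded_linear_maps norm_ge_zero)
  finally have "norm e * norm e \<le> norm e * ((onorm Bi + onorm (adjoint B)) * norm r)"
    by (simp add: power2_eq_square algebra_simps)
  then show ?thesis
    using onorm_pos_le[OF bounded_linear_maps(2)] onorm_pos_le[OF bounded_linear_maps(3)]
    by (cases "norm e = 0") auto
qed

lemma Q_linearization_error:
  assumes Q': "(Q has_derivative V) (at w)"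
  obtains W where "(P has_derivative W) (at (Psi w))"
    and "norm (Q w - Q y - V (w - y))
      \<le> (onorm Bi + onorm (adjoint B)) * norm (P (Psi w) - P (Psi y) - W (Psi w - Psi y))"
proof -
  obtain W where P': "(P has_derivative W) (at (Psi w))"
    and W_T: "\<And>v. W (Bi (V v) + adjoint B (v - V v)) = Bi (V v)"
    using has_derivative_P_at_Psi[OF Q'] by blast
  have W: "bounded_linear W" "bounded_linear V"
    using P' Q' by (simp_all add: has_derivative_bounded_linear)
  define e where "e = Q w - Q y - V (w - y)"
  define r where "r = P (Psi w) - P (Psi y) - W (Psi w - Psi y)"
  have "Bi e - adjoint B e = (Psi w - Psi y) - (Bi (V (w - y)) + adjoint B ((w - y) - V (w - y)))"
    by (simp add: Psi_diff e_def linear_iso_simps algebra_simps)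
  then have "W (Bi e - adjoint B e) = W (Psi w - Psi y) - Bi (V (w - y))"
    by (simp add: W_T linear_simps(2)[OF W(1)])
  also have "\<dots> = Bi e - r"
    by (simp add: e_def r_def closest_point_Psi linear_iso_simps)
  finally have "norm e \<le> (onorm Bi + onorm (adjoint B)) * norm r"
    by (rule firm_error_bound[OF closest_point_derivative_firm[OF convex_K closed_K nonempty_K P']])
  with P' show ?thesis
    unfolding e_def r_def by (rule that)
qed

lemma semismooth_deriv_bound_Q:
  assumes "semismooth_deriv_bound p P (Psi y)" and "p > 0"
  shows "semismooth_deriv_bound p Q y"
proof -
  obtain C \<delta> where "\<delta> > 0" and bound: "\<And>d W. norm d < \<delta> \<Longrightarrow> (P has_derivative W) (at (Psi y + d)) \<Longrightarrow>
      norm (P (Psi y + d) - P (Psi y) - W d) \<le> C * norm d powr (1 + p)"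
    using assms(1) unfolding semismooth_deriv_bound_def by blast
  obtain L where "L > 0" and Psi_lip: "\<And>a b. norm (Psi a - Psi b) \<le> L * norm (a - b)"
    using Psi_lipschitz by blast
  define c where "c = onorm Bi + onorm (adjoint B)"
  have "c \<ge> 0"
    unfolding c_def using onorm_pos_le[OF bounded_linear_maps(2)] onorm_pos_le[OF bounded_linear_maps(3)]
    by simp
  have "norm (Q (y + h) - Q y - V h) \<le> c * \<bar>C\<bar> * L powr (1 + p) * norm h powr (1 + p)"
    if h: "norm h < \<delta> / L" and Q': "(Q has_derivative V) (at (y + h))" for h V
  proof -
    define d where "d = Psi (y + h) - Psi y"
    obtain W where P': "(P has_derivative W) (at (Psi y + d))"
      and err: "norm (Q (y + h) - Q y - V h) \<le> c * norm (P (Psi y + d) - P (Psi y) - W d)"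
      using Q_linearization_error[OF Q', of y] unfolding c_def d_def by auto
    have d_le: "norm d \<le> L * norm h"
      using Psi_lip[of "y + h" y] by (simp add: d_def)
    moreover have "L * norm h < \<delta>"
      using h \<open>L > 0\<close> by (simp add: less_divide_eq mult.commute)
    ultimately have "norm d < \<delta>"
      by linarith
    have "norm (P (Psi y + d) - P (Psi y) - W d) \<le> C * norm d powr (1 + p)"
      by (rule bound[OF \<open>norm d < \<delta>\<close> P'])
    also have "\<dots> \<le> \<bar>C\<bar> * (L * norm h) powr (1 + p)"
      using d_le \<open>p > 0\<close>
      by (intro mult_mono powr_mono2) auto
    also have "\<dots> = \<bar>C\<bar> * L powr (1 + p) * norm h powr (1 + p)"
      using \<open>L > 0\<close> by (simp add: powr_mult)
    finally have "c * norm (P (Psi y + d) - P (Psi y) - W d)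
        \<le> c * (\<bar>C\<bar> * L powr (1 + p) * norm h powr (1 + p))"
      using \<open>c \<ge> 0\<close> by (rule mult_left_mono)
    with err show ?thesis
      by (simp add: mult.assoc)
  qed
  moreover have "\<delta> / L > 0"
    using \<open>\<delta> > 0\<close> \<open>L > 0\<close> by simp
  ultimately show ?thesis
    unfolding semismooth_deriv_bound_def by blast
qed

lemma semismooth_Q:
  assumes "semismooth p P" and "p > 0"
  shows "semismooth p Q"
proof -
  have "dir_differentiable_at P x" "semismooth_deriv_bound p P x" for x
    using assms semismooth_closest_point_iff[OF convex_K closed_K nonempty_K] by auto
  then show ?thesis
    unfolding semismooth_closest_point_iff[OF convex_image closed_image nonempty_image \<open>p > 0\<close>]
    using dir_differentiable_at_Q semismooth_deriv_bound_Q[OF _ \<open>p > 0\<close>] by blast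
qed

end

section \<open>Projection onto an isometric image\<close>

lemma inner_linear_isometry:
  fixes J :: "'a::real_inner \<Rightarrow> 'b::real_inner"
  assumes "linear J" and "\<And>x. norm (J x) = norm x"
  shows "inner (J x) (J y) = inner x y"
proof -
  have "inner (J v) (J v) = inner v v" for v
    using assms(2)[of v] by (simp add: dot_square_norm)
  from this[of "x + y"] this[of x] this[of y] show ?thesis
    by (simp add: linear_add[OF assms(1)] inner_add_left inner_add_right inner_commute)
qed

lemma adjoint_linear_isometry:
  fixes J :: "'a::euclidean_space \<Rightarrow> 'b::euclidean_space"
  assumes "linear J" and "\<And>x. norm (J x) = norm x"
  shows "adjoint J (J x) = x"
proof -
  have "inner z (adjoint J (J x)) = inner z x" for z
    using adjoint_works[OF assms(1)] inner_linear_isometry[OF assms] by simp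
  then show ?thesis using vector_eq_ldot by blast
qed

locale closest_point_isometry =
  fixes J :: "'a::euclidean_space \<Rightarrow> 'b::euclidean_space" and S :: "'a set"
  assumes linear_J: "linear J" and norm_J: "\<And>x. norm (J x) = norm x"
    and convex_S: "convex S" and closed_S: "closed S" and nonempty_S: "S \<noteq> {}"
begin

abbreviation "P \<equiv> closest_point S"
abbreviation "Q \<equiv> closest_point (J ` S)"

lemma bounded_linear_maps: "bounded_linear J" "bounded_linear (adjoint J)"
  using linear_J adjoint_linear by (auto simp: linear_conv_bounded_linear)

lemmas linear_isometry_simps =
  linear_simps[OF bounded_linear_maps(1)] linear_simps[OF bounded_linear_maps(2)]

lemma adjoint_J: "adjoint J (J x) = x"
  using adjoint_linear_isometry[OF linear_J norm_J] .

lemma norm_adjoint_J: "norm (adjoint J v) \<le> norm v"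
proof -
  have "(norm (adjoint J v))\<^sup>2 = inner (J (adjoint J v)) v"
    by (simp add: adjoint_clauses(1)[OF linear_J, symmetric] power2_norm_eq_inner)
  also have "\<dots> \<le> norm (adjoint J v) * norm v"
    using norm_cauchy_schwarz[of "J (adjoint J v)" v] by (simp add: norm_J)
  finally have "norm (adjoint J v) * norm (adjoint J v) \<le> norm (adjoint J v) * norm v"
    by (simp add: power2_eq_square)
  then show ?thesis
    by (cases "adjoint J v = 0") simp_all
qed

lemma convex_image: "convex (J ` S)"
  using convex_linear_image[OF linear_J convex_S] .

lemma closed_image: "closed (J ` S)"
  using closed_injective_linear_image[OF closed_S linear_J] adjoint_J by (metis injI)

lemma nonempty_image: "J ` S \<noteq> {}"
  using nonempty_S by simp

lemma closest_point_image: "Q z = J (P (adjoint J z))"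
proof (rule closest_point_eqI[OF convex_image closed_image])
  show "J (P (adjoint J z)) \<in> J ` S"
    using closest_point_in_set[OF closed_S nonempty_S] by simp
  show "inner (z - J (P (adjoint J z))) (s - J (P (adjoint J z))) \<le> 0" if "s \<in> J ` S" for s
  proof -
    obtain k where "k \<in> S" "s = J k" using \<open>s \<in> J ` S\<close> by blast
    then have "s - J (P (adjoint J z)) = J (k - P (adjoint J z))"
      by (simp add: linear_isometry_simps)
    then have "inner (z - J (P (adjoint J z))) (s - J (P (adjoint J z)))
        = inner (adjoint J (z - J (P (adjoint J z)))) (k - P (adjoint J z))"
      by (simp add: adjoint_clauses(2)[OF linear_J])
    also have "\<dots> = inner (adjoint J z - P (adjoint J z)) (k - P (adjoint J z))"
      by (simp add: linear_isometry_simps adjoint_J)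
    also have "\<dots> \<le> 0"
      by (rule closest_point_dot[OF convex_S closed_S \<open>k \<in> S\<close>])
    finally show ?thesis .
  qed
qed

lemma closest_point_preimage: "P x = adjoint J (Q (J x))"
  by (simp add: closest_point_image adjoint_J)

lemma has_derivative_Q:
  assumes "(P has_derivative W) (at (adjoint J w))"
  shows "(Q has_derivative (\<lambda>v. J (W (adjoint J v)))) (at w)"
  unfolding closest_point_image
  by (rule bounded_linear.has_derivative[OF bounded_linear_maps(1)
        has_derivative_compose[OF bounded_linear_imp_has_derivative[OF bounded_linear_maps(2)] assms]])

lemma has_derivative_Q_imp:
  assumes Q': "(Q has_derivative V) (at w)"
  obtains W where "(P has_derivative W) (at (adjoint J w))" and "V = (\<lambda>v. J (W (adjoint J v)))"
proof -
  have P_eq: "P = (\<lambda>z. adjoint J (Q (w + J (z - adjoint J w))))"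
    by (simp add: fun_eq_iff closest_point_image linear_isometry_simps adjoint_J)
  have "((\<lambda>z. w + J (z - adjoint J w)) has_derivative (\<lambda>v. 0 + J (v - 0))) (at (adjoint J w))"
    by (intro has_derivative_add has_derivative_const has_derivative_diff has_derivative_ident
        bounded_linear.has_derivative[OF bounded_linear_maps(1)])
  then have affine: "((\<lambda>z. w + J (z - adjoint J w)) has_derivative J) (at (adjoint J w))"
    by simp
  have "(Q has_derivative V) (at (w + J (adjoint J w - adjoint J w)))"
    using Q' by (simp add: linear_isometry_simps)
  then have P': "(P has_derivative (\<lambda>v. adjoint J (V (J v)))) (at (adjoint J w))"
    unfolding P_eq
    by (rule bounded_linear.has_derivative[OF bounded_linear_maps(2) has_derivative_compose[OF affine]])
  moreover have "V = (\<lambda>v. J (adjoint J (V (J (adjoint J v)))))"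
    using has_derivative_unique[OF Q' has_derivative_Q[OF P']] .
  ultimately show ?thesis
    using that by blast
qed

lemma dir_differentiable_at_Q:
  assumes "dir_differentiable_at P (adjoint J y)"
  shows "dir_differentiable_at Q y"
  unfolding dir_differentiable_at_def
proof
  fix h
  obtain d
    where "((\<lambda>t. (P (adjoint J y + t *\<^sub>R adjoint J h) - P (adjoint J y)) /\<^sub>R t) \<longlongrightarrow> d) (at_right 0)"
    using assms unfolding dir_differentiable_at_def by blast
  from bounded_linear.tendsto[OF bounded_linear_maps(1) this]
  show "\<exists>d. ((\<lambda>t. (Q (y + t *\<^sub>R h) - Q y) /\<^sub>R t) \<longlongrightarrow> d) (at_right 0)"
    by (auto simp: closest_point_image linear_isometry_simps)
qed

lemma dir_differentiable_at_P:
  assumes "dir_differentiable_at Q (J x)"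
  shows "dir_differentiable_at P x"
  unfolding dir_differentiable_at_def
proof
  fix h
  obtain d where "((\<lambda>t. (Q (J x + t *\<^sub>R J h) - Q (J x)) /\<^sub>R t) \<longlongrightarrow> d) (at_right 0)"
    using assms unfolding dir_differentiable_at_def by blast
  from bounded_linear.tendsto[OF bounded_linear_maps(2) this]
  show "\<exists>d. ((\<lambda>t. (P (x + t *\<^sub>R h) - P x) /\<^sub>R t) \<longlongrightarrow> d) (at_right 0)"
    by (auto simp: closest_point_preimage linear_isometry_simps)
qed

lemma semismooth_deriv_bound_Q:
  assumes "semismooth_deriv_bound p P (adjoint J y)" and "p > 0"
  shows "semismooth_deriv_bound p Q y"
proof -
  obtain C \<delta> where "\<delta> > 0"
    and bound: "\<And>h W. norm h < \<delta> \<Longrightarrow> (P has_derivative W) (at (adjoint J y + h)) \<Longrightarrow>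
      norm (P (adjoint J y + h) - P (adjoint J y) - W h) \<le> C * norm h powr (1 + p)"
    using assms(1) unfolding semismooth_deriv_bound_def by blast
  have "norm (Q (y + h) - Q y - V h) \<le> \<bar>C\<bar> * norm h powr (1 + p)"
    if "norm h < \<delta>" and Q': "(Q has_derivative V) (at (y + h))" for h V
  proof -
    obtain W where P': "(P has_derivative W) (at (adjoint J y + adjoint J h))"
      and V: "V = (\<lambda>v. J (W (adjoint J v)))"
      using has_derivative_Q_imp[OF Q'] by (auto simp: linear_isometry_simps)
    let ?err = "P (adjoint J y + adjoint J h) - P (adjoint J y) - W (adjoint J h)"
    have "Q (y + h) - Q y - V h = J ?err"
      by (simp add: V closest_point_image linear_isometry_simps)
    then have "norm (Q (y + h) - Q y - V h) = norm ?err"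
      by (simp add: norm_J)
    also have "\<dots> \<le> C * norm (adjoint J h) powr (1 + p)"
      using norm_adjoint_J[of h] \<open>norm h < \<delta>\<close> by (intro bound P') simp
    also have "\<dots> \<le> \<bar>C\<bar> * norm h powr (1 + p)"
      using norm_adjoint_J[of h] \<open>p > 0\<close> by (intro mult_mono powr_mono2) auto
    finally show ?thesis .
  qed
  with \<open>\<delta> > 0\<close> show ?thesis
    unfolding semismooth_deriv_bound_def by blast
qed

lemma semismooth_deriv_bound_P:
  assumes "semismooth_deriv_bound p Q (J x)"
  shows "semismooth_deriv_bound p P x"
proof -
  obtain C \<delta> where "\<delta> > 0" and bound: "\<And>h V. norm h < \<delta> \<Longrightarrow> (Q has_derivative V) (at (J x + h)) \<Longrightarrow>
      norm (Q (J x + h) - Q (J x) - V h) \<le> C * norm h powr (1 + p)"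
    using assms unfolding semismooth_deriv_bound_def by blast
  have "norm (P (x + h) - P x - W h) \<le> C * norm h powr (1 + p)"
    if "norm h < \<delta>" and P': "(P has_derivative W) (at (x + h))" for h W
  proof -
    have "(Q has_derivative (\<lambda>v. J (W (adjoint J v)))) (at (J x + J h))"
      using P' by (intro has_derivative_Q) (simp add: adjoint_J linear_isometry_simps)
    then have "norm (Q (J x + J h) - Q (J x) - J (W (adjoint J (J h)))) \<le> C * norm (J h) powr (1 + p)"
      using \<open>norm h < \<delta>\<close> by (intro bound) (simp_all add: norm_J)
    moreover have "Q (J x + J h) - Q (J x) - J (W (adjoint J (J h))) = J (P (x + h) - P x - W h)"
      by (simp add: closest_point_image adjoint_J linear_isometry_simps)
    ultimately show ?thesis
      by (simp add: norm_J)
  qed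
  with \<open>\<delta> > 0\<close> show ?thesis
    unfolding semismooth_deriv_bound_def by blast
qed

lemma semismooth_iff:
  assumes "p > 0"
  shows "semismooth p P \<longleftrightarrow> semismooth p Q"
  unfolding semismooth_closest_point_iff[OF convex_S closed_S nonempty_S assms]
    semismooth_closest_point_iff[OF convex_image closed_image nonempty_image assms]
  using dir_differentiable_at_Q dir_differentiable_at_P
    semismooth_deriv_bound_Q[OF _ assms] semismooth_deriv_bound_P by blast

end

section \<open>Injective linear images\<close>

lemma linear_injective_factor_isometry:
  fixes A :: "'a::euclidean_space \<Rightarrow> 'b::euclidean_space"
  assumes "linear A" and "inj A"
  obtains J :: "'a \<Rightarrow> 'b" and B :: "'a \<Rightarrow> 'a"
  where "linear J" "\<And>x. norm (J x) = norm x" "linear B" "inj B" "\<And>x. A x = J (B x)"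
proof -
  have "dim (UNIV :: 'a set) = dim (range A)"
    using dim_image_eq[OF assms(1), of UNIV] assms(2) by (simp add: inj_on_def)
  then obtain J :: "'a \<Rightarrow> 'b" and G where "linear J" "linear G" "\<And>x. norm (J x) = norm x"
    and J_G: "\<And>y. y \<in> range A \<Longrightarrow> J (G y) = y"
    by (rule isometries_subspaces[OF subspace_UNIV linear_subspace_image[OF assms(1) subspace_UNIV]])
      auto
  have A_eq: "A x = J (G (A x))" for x
    using J_G by simp
  show ?thesis
  proof (rule that)
    show "linear (\<lambda>x. G (A x))"
      using linear_compose[OF assms(1) \<open>linear G\<close>] by (simp add: comp_def)
    show "inj (\<lambda>x. G (A x))"
    proof (rule injI)
      fix x y
      assume "G (A x) = G (A y)"
      then have "A x = A y"
        by (metis A_eq)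
      with assms(2) show "x = y"
        by (rule injD)
    qed
  qed fact+
qed

theorem lemma2:
  fixes A :: "'a::euclidean_space \<Rightarrow> 'b::euclidean_space"
    and K :: "'a set" and p :: real
  assumes "linear A" and "inj A"
    and "K \<noteq> {}" and "closed K" and "convex K"
    and "p > 0"
  shows "semismooth p (closest_point K) \<longleftrightarrow> semismooth p (closest_point (A ` K))"
proof -
  obtain J :: "'a \<Rightarrow> 'b" and B :: "'a \<Rightarrow> 'a"
    where J: "linear J" "\<And>x. norm (J x) = norm x" and B: "linear B" "inj B"
    and A: "\<And>x. A x = J (B x)"
    using linear_injective_factor_isometry[OF assms(1,2)] by blast
  obtain Bi where Bi: "linear Bi" "\<And>x. Bi (B x) = x" "\<And>y. B (Bi y) = y"
    using linear_injective_isomorphism[OF B] by auto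
  have forward: "closest_point_linear_iso B Bi K"
    using B Bi assms(3-5) by (simp add: closest_point_linear_iso_def)
  have image: "convex (B ` K)" "closed (B ` K)" "B ` K \<noteq> {}"
    using closest_point_linear_iso.convex_image[OF forward]
      closest_point_linear_iso.closed_image[OF forward]
      closest_point_linear_iso.nonempty_image[OF forward] .
  have backward: "closest_point_linear_iso Bi B (B ` K)"
    using B Bi image by (simp add: closest_point_linear_iso_def)
  have isometry: "closest_point_isometry J (B ` K)"
    using J image by (simp add: closest_point_isometry_def)
  have "Bi ` B ` K = K" "J ` B ` K = A ` K"
    by (simp_all add: image_image Bi(2) A)
  then show ?thesis
    using closest_point_linear_iso.semismooth_Q[OF forward _ \<open>p > 0\<close>]
      closest_point_linear_iso.semismooth_Q[OF backward _ \<open>p > 0\<close>]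
      closest_point_isometry.semismooth_iff[OF isometry \<open>p > 0\<close>]
    by metis
qed

end
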